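(* In the setting described in the context, there is a constant $C>0$ independent of the mesh size such that $\eta_3\le C(\eta_1+\eta_4)$.
   Context: $\Omega\subset\mathbb{R}^d$ ($1\le d\le3$) is a bounded polyhedral domain, $f\in L^2(\Omega)$, and the obstacle $\chi\in C(\bar\Omega)\cap H^1(\Omega)$ satisfies $\chi\le 0$ on $\partial\Omega$. $\mathcal{T}_h$ is a conforming shape-regular triangulation of $\Omega$ into closed triangles; $h_T$ is the diameter and $|T|$ the area of $T$; $\mathcal{M}_h$ is the set of all edge midpoints, $\mathcal{M}_h^i$ the set of midpoints of interior edges, $\mathcal{V}_h^i$ the interior vertices, $\mathcal{M}_T$ the three edge midpoints of $T$. $V_h=\{v\in H^1_0(\Omega): v|_T\in\mathbb{P}_2(T)\ \forall T\}$ with nodal basis $\{\psi_z: z\in\mathcal{V}_h^i\cup\mathcal{M}_h^i\}$. $V_{nc}$ is the Crouzeix–Raviart space (piecewise affine, continuous at interior edge midpoints, vanishing at boundary edge midpoints). For $v\in V_{nc}$, $\Pi_hv:=\sum_{z\in\mathcal{M}_h^i}v(z)\psi_z$. $a(v,w)=(\nabla v,\nabla w)$. $\mathcal{K}_h=\{v_h\in V_h: v_h(z)\ge\chi(z)\ \forall z\in\mathcal{M}_h\}$, and $u_h\in\mathcal{K}_h$ solves $a(u_h,v_h-u_h)\ge(f,v_h-u_h)$ for all $v_h\in\mathcal{K}_h$. With $\langle w,v\rangle_h=\sum_{T}\frac{|T|}{3}\sum_{z\in\mathcal{M}_T}w(z)v(z)$, $\sigma_h\in V_{nc}$ is defined by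 $\langle\sigma_h,v_h\rangle_h=(f,\Pi_hv_h)-a(u_h,\Pi_hv_h)$ for all $v_h\in V_{nc}$. $\bar v$ denotes the elementwise mean of $v\in L^2(\Omega)$. The estimators are $\eta_1=\big(\sum_{T}h_T^2\|\Delta u_h+f-\sigma_h\|_{L^2(T)}^2\big)^{1/2}$ (with $\Delta u_h$ computed elementwise), $\eta_3=\big(\sum_T h_T^2\|\sigma_h-\bar\sigma_h\|_{L^2(T)}^2\big)^{1/2}$, and $\eta_4=\big(\sum_T h_T^2\min_{c\in\mathbb{R}}\|f-c\|_{L^2(T)}^2\big)^{1/2}$. *)

theory Defs
  imports "HOL-Analysis.Analysis"
begin

type_synonym pt = "real \<times> real"

definition L2_on :: "pt set \<Rightarrow> (pt \<Rightarrow> real) \<Rightarrow> bool" where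
  "L2_on S f \<longleftrightarrow> f \<in> borel_measurable (lebesgue_on S) \<and>
     integrable (lebesgue_on S) (\<lambda>x. (f x)\<^sup>2)"

definition L2norm :: "pt set \<Rightarrow> (pt \<Rightarrow> real) \<Rightarrow> real" where
  "L2norm S f = sqrt (LINT x|lebesgue_on S. (f x)\<^sup>2)"

text \<open>partial derivatives: True = first coordinate, False = second coordinate\<close>
definition pd :: "bool \<Rightarrow> (pt \<Rightarrow> real) \<Rightarrow> pt \<Rightarrow> real" where
  "pd i f x = (if i then deriv (\<lambda>t. f (t, snd x)) (fst x)
                    else deriv (\<lambda>t. f (fst x, t)) (snd x))"

definition smooth :: "(pt \<Rightarrow> real) \<Rightarrow> bool" where
  "smooth \<phi> \<longleftrightarrow> (\<forall>ds::bool list. foldr pd ds \<phi> differentiable_on UNIV)"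

definition test_fun :: "pt set \<Rightarrow> (pt \<Rightarrow> real) \<Rightarrow> bool" where
  "test_fun \<Omega> \<phi> \<longleftrightarrow> smooth \<phi> \<and> compact (closure {x. \<phi> x \<noteq> 0}) \<and>
      closure {x. \<phi> x \<noteq> 0} \<subseteq> \<Omega>"

definition H1_on :: "pt set \<Rightarrow> (pt \<Rightarrow> real) \<Rightarrow> bool" where
  "H1_on \<Omega> v \<longleftrightarrow> L2_on \<Omega> v \<and>
     (\<forall>i. \<exists>g. L2_on \<Omega> g \<and> (\<forall>\<phi>. test_fun \<Omega> \<phi> \<longrightarrow>
        (LINT x|lebesgue_on \<Omega>. v x * pd i \<phi> x) = - (LINT x|lebesgue_on \<Omega>. g x * \<phi> x)))"

definition grad_dot :: "(pt \<Rightarrow> real) \<Rightarrow> (pt \<Rightarrow> real) \<Rightarrow> pt \<Rightarrow> real" where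
  "grad_dot v w x = pd True v x * pd True w x + pd False v x * pd False w x"

definition lap :: "(pt \<Rightarrow> real) \<Rightarrow> pt \<Rightarrow> real" where
  "lap v x = pd True (pd True v) x + pd False (pd False v) x"

definition is_triangle :: "pt set \<Rightarrow> bool" where
  "is_triangle T \<longleftrightarrow> (\<exists>a b c. card {a, b, c} = 3 \<and> \<not> affine_dependent {a, b, c} \<and>
                         T = convex hull {a, b, c})"

definition verts :: "pt set \<Rightarrow> pt set" where
  "verts T = {x. x extreme_point_of T}"

definition edges :: "pt set \<Rightarrow> pt set set" where
  "edges T = {closed_segment a b | a b. a \<in> verts T \<and> b \<in> verts T \<and> a \<noteq> b}"

definition mids :: "pt set \<Rightarrow> pt set" where
  "mids T = {midpoint a b | a b. a \<in> verts T \<and> b \<in> verts T \<and> a \<noteq> b}"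

definition conforming :: "pt set set \<Rightarrow> bool" where
  "conforming \<T> \<longleftrightarrow> (\<forall>T\<in>\<T>. \<forall>T'\<in>\<T>. T \<noteq> T' \<longrightarrow>
      T \<inter> T' = {} \<or> (\<exists>z \<in> verts T \<inter> verts T'. T \<inter> T' = {z}) \<or>
      (\<exists>e \<in> edges T \<inter> edges T'. T \<inter> T' = e))"

definition domain :: "pt set \<Rightarrow> bool" where
  "domain \<Omega> \<longleftrightarrow> open \<Omega> \<and> connected \<Omega> \<and> bounded \<Omega> \<and> \<Omega> \<noteq> {} \<and>
      interior (closure \<Omega>) = \<Omega>"

definition triangulation :: "pt set \<Rightarrow> pt set set \<Rightarrow> bool" where
  "triangulation \<Omega> \<T> \<longleftrightarrow> finite \<T> \<and> \<T> \<noteq> {} \<and> (\<forall>T\<in>\<T>. is_triangle T) \<and>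
      \<Union>\<T> = closure \<Omega> \<and> conforming \<T>"

definition shape_regular :: "real \<Rightarrow> pt set set \<Rightarrow> bool" where
  "shape_regular \<kappa> \<T> \<longleftrightarrow> (\<forall>T\<in>\<T>. (diameter T)\<^sup>2 \<le> \<kappa> * measure lebesgue T)"

definition Mh :: "pt set set \<Rightarrow> pt set" where
  "Mh \<T> = (\<Union>T\<in>\<T>. mids T)"

definition Mhi :: "pt set \<Rightarrow> pt set set \<Rightarrow> pt set" where
  "Mhi \<Omega> \<T> = Mh \<T> - frontier \<Omega>"

definition Vhi :: "pt set \<Rightarrow> pt set set \<Rightarrow> pt set" where
  "Vhi \<Omega> \<T> = (\<Union>T\<in>\<T>. verts T) - frontier \<Omega>"

definition P2_on :: "pt set \<Rightarrow> (pt \<Rightarrow> real) \<Rightarrow> bool" where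
  "P2_on T v \<longleftrightarrow> (\<exists>a b c d e g. \<forall>x\<in>T. v x = a + b * fst x + c * snd x +
       d * (fst x)\<^sup>2 + e * fst x * snd x + g * (snd x)\<^sup>2)"

definition affine_fun :: "(pt \<Rightarrow> real) \<Rightarrow> bool" where
  "affine_fun v \<longleftrightarrow> (\<exists>a b c. \<forall>x. v x = a + b * fst x + c * snd x)"

text \<open>continuous piecewise quadratics vanishing on the boundary (extended by zero)\<close>
definition Vh :: "pt set \<Rightarrow> pt set set \<Rightarrow> (pt \<Rightarrow> real) set" where
  "Vh \<Omega> \<T> = {v. (\<forall>T\<in>\<T>. P2_on T v) \<and> (\<forall>x. x \<notin> \<Omega> \<longrightarrow> v x = 0)}"

definition psi :: "pt set \<Rightarrow> pt set set \<Rightarrow> pt \<Rightarrow> pt \<Rightarrow> real" where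
  "psi \<Omega> \<T> z = (THE w. w \<in> Vh \<Omega> \<T> \<and>
      (\<forall>y \<in> Vhi \<Omega> \<T> \<union> Mhi \<Omega> \<T>. w y = (if y = z then 1 else 0)))"

text \<open>Crouzeix-Raviart functions, represented elementwise (T maps to the affine piece on T)\<close>
definition Vnc :: "pt set \<Rightarrow> pt set set \<Rightarrow> (pt set \<Rightarrow> pt \<Rightarrow> real) set" where
  "Vnc \<Omega> \<T> = {s. (\<forall>T\<in>\<T>. affine_fun (s T)) \<and>
      (\<forall>T\<in>\<T>. \<forall>T'\<in>\<T>. \<forall>m \<in> mids T \<inter> mids T'. s T m = s T' m) \<and>
      (\<forall>T\<in>\<T>. \<forall>m \<in> mids T. m \<in> frontier \<Omega> \<longrightarrow> s T m = 0)}"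

definition nc_val :: "pt set set \<Rightarrow> (pt set \<Rightarrow> pt \<Rightarrow> real) \<Rightarrow> pt \<Rightarrow> real" where
  "nc_val \<T> s z = s (SOME T. T \<in> \<T> \<and> z \<in> mids T) z"

definition Pih :: "pt set \<Rightarrow> pt set set \<Rightarrow> (pt set \<Rightarrow> pt \<Rightarrow> real) \<Rightarrow> pt \<Rightarrow> real" where
  "Pih \<Omega> \<T> s = (\<lambda>x. \<Sum>z\<in>Mhi \<Omega> \<T>. nc_val \<T> s z * psi \<Omega> \<T> z x)"

definition a_form :: "pt set \<Rightarrow> (pt \<Rightarrow> real) \<Rightarrow> (pt \<Rightarrow> real) \<Rightarrow> real" where
  "a_form \<Omega> v w = (LINT x|lebesgue_on \<Omega>. grad_dot v w x)"

definition L2ip :: "pt set \<Rightarrow> (pt \<Rightarrow> real) \<Rightarrow> (pt \<Rightarrow> real) \<Rightarrow> real" where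
  "L2ip \<Omega> v w = (LINT x|lebesgue_on \<Omega>. v x * w x)"

definition Kh :: "pt set \<Rightarrow> pt set set \<Rightarrow> (pt \<Rightarrow> real) \<Rightarrow> (pt \<Rightarrow> real) set" where
  "Kh \<Omega> \<T> chi = {v \<in> Vh \<Omega> \<T>. \<forall>z \<in> Mh \<T>. v z \<ge> chi z}"

definition disc_ip :: "pt set set \<Rightarrow> (pt set \<Rightarrow> pt \<Rightarrow> real) \<Rightarrow> (pt set \<Rightarrow> pt \<Rightarrow> real) \<Rightarrow> real" where
  "disc_ip \<T> w v = (\<Sum>T\<in>\<T>. measure lebesgue T / 3 * (\<Sum>z\<in>mids T. w T z * v T z))"

definition eta1 :: "pt set set \<Rightarrow> (pt \<Rightarrow> real) \<Rightarrow> (pt \<Rightarrow> real) \<Rightarrow> (pt set \<Rightarrow> pt \<Rightarrow> real) \<Rightarrow> real" where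
  "eta1 \<T> f u \<sigma> = sqrt (\<Sum>T\<in>\<T>. (diameter T)\<^sup>2 * (L2norm T (\<lambda>x. lap u x + f x - \<sigma> T x))\<^sup>2)"

definition elem_mean :: "pt set \<Rightarrow> (pt \<Rightarrow> real) \<Rightarrow> real" where
  "elem_mean T v = (LINT x|lebesgue_on T. v x) / measure lebesgue T"

definition eta3 :: "pt set set \<Rightarrow> (pt set \<Rightarrow> pt \<Rightarrow> real) \<Rightarrow> real" where
  "eta3 \<T> \<sigma> = sqrt (\<Sum>T\<in>\<T>. (diameter T)\<^sup>2 * (L2norm T (\<lambda>x. \<sigma> T x - elem_mean T (\<sigma> T)))\<^sup>2)"

definition eta4 :: "pt set set \<Rightarrow> (pt \<Rightarrow> real) \<Rightarrow> real" where
  "eta4 \<T> f = sqrt (\<Sum>T\<in>\<T>. (diameter T)\<^sup>2 * (INF c::real. L2norm T (\<lambda>x. f x - c))\<^sup>2)"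

end

theory Submission
  imports Defs
begin

text \<open>
  On a triangle T the discrete solution is quadratic, so its Laplacian is a constant L on the
  interior of T. The elementwise mean minimises the L2 deviation from constants, hence for every
  real c
    ||sigma - mean(sigma)||_T <= ||sigma - (c + L)||_T <= ||f - c||_T + ||lap u + f - sigma||_T
  by Minkowski's inequality. Multiplying by h_T and using the triangle inequality in l2 over the
  elements gives eta3 <= eta4 + eta1, i.e. the constant is 1.
\<close>

lemma sqrt_le_add_sqrt_if_weighted_bound:
  fixes A B x :: real
  assumes "A \<ge> 0" "B \<ge> 0" and bound: "\<And>t. t > 0 \<Longrightarrow> x \<le> (1 + t) * A + (1 + 1/t) * B"
  shows "sqrt x \<le> sqrt A + sqrt B"
proof (rule field_le_epsilon)
  fix e :: real assume "e > 0"
  \<comment> \<open>the optimal weight t = sqrt B / sqrt A, perturbed so that A = 0 or B = 0 needs no case split\<close>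
  define \<alpha> \<beta> where "\<alpha> = sqrt A + e/2" and "\<beta> = sqrt B + e/2"
  have pos: "\<alpha> > 0" "\<beta> > 0" using \<open>e > 0\<close> assms(1,2) by (simp_all add: \<alpha>_def \<beta>_def add_nonneg_pos)
  have "A / \<alpha> \<le> sqrt A" "B / \<beta> \<le> sqrt B"
    using pos assms(1,2) \<open>e > 0\<close> real_sqrt_ge_zero
    by (simp_all add: \<alpha>_def \<beta>_def divide_le_eq distrib_left flip: power2_eq_square)
  then have "(\<alpha> + \<beta>) * (A / \<alpha> + B / \<beta>) \<le> (\<alpha> + \<beta>) * (sqrt A + sqrt B)"
    using pos by (intro mult_left_mono add_mono) simp_all
  moreover have "(1 + \<beta>/\<alpha>) * A + (1 + 1/(\<beta>/\<alpha>)) * B = (\<alpha> + \<beta>) * (A / \<alpha> + B / \<beta>)"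
    using pos by (simp add: field_simps)
  ultimately have "(1 + \<beta>/\<alpha>) * A + (1 + 1/(\<beta>/\<alpha>)) * B \<le> (\<alpha> + \<beta>) * (sqrt A + sqrt B)"
    by simp
  also have "\<dots> \<le> (\<alpha> + \<beta>)\<^sup>2"
    using pos \<open>e > 0\<close> by (simp add: power2_eq_square \<alpha>_def \<beta>_def mult_left_mono)
  finally have "x \<le> (\<alpha> + \<beta>)\<^sup>2" using bound[of "\<beta>/\<alpha>"] pos by simp
  then show "sqrt x \<le> sqrt A + sqrt B + e"
    using pos real_sqrt_le_mono by (fastforce simp: \<alpha>_def \<beta>_def)
qed

lemma integrable_square_diff:
  fixes a b :: "'a \<Rightarrow> real"
  assumes [measurable]: "a \<in> borel_measurable M" "b \<in> borel_measurable M"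
    and "integrable M (\<lambda>x. (a x)\<^sup>2)" "integrable M (\<lambda>x. (b x)\<^sup>2)"
  shows "integrable M (\<lambda>x. (a x - b x)\<^sup>2)"
proof (rule Bochner_Integration.integrable_bound)
  show "integrable M (\<lambda>x. 2 * (a x)\<^sup>2 + 2 * (b x)\<^sup>2)" using assms(3,4) by auto
  show "AE x in M. norm ((a x - b x)\<^sup>2) \<le> norm (2 * (a x)\<^sup>2 + 2 * (b x)\<^sup>2)"
  proof (intro AE_I2)
    fix x
    have "(a x - b x)\<^sup>2 \<le> 2 * (a x)\<^sup>2 + 2 * (b x)\<^sup>2"
      using zero_le_power2[of "a x + b x"] by (simp add: power2_eq_square algebra_simps)
    then show "norm ((a x - b x)\<^sup>2) \<le> norm (2 * (a x)\<^sup>2 + 2 * (b x)\<^sup>2)" by simp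
  qed
qed measurable

lemma sqrt_integral_square_diff_le:
  fixes a b :: "'a \<Rightarrow> real"
  assumes [measurable]: "a \<in> borel_measurable M" "b \<in> borel_measurable M"
    and a2: "integrable M (\<lambda>x. (a x)\<^sup>2)" and b2: "integrable M (\<lambda>x. (b x)\<^sup>2)"
  shows "sqrt (\<integral>x. (a x - b x)\<^sup>2 \<partial>M) \<le> sqrt (\<integral>x. (a x)\<^sup>2 \<partial>M) + sqrt (\<integral>x. (b x)\<^sup>2 \<partial>M)"
proof (rule sqrt_le_add_sqrt_if_weighted_bound)
  fix t :: real assume "t > 0"
  have "(a x - b x)\<^sup>2 \<le> (1 + t) * (a x)\<^sup>2 + (1 + 1/t) * (b x)\<^sup>2" for x
  proof -
    have "0 \<le> (t * a x + b x)\<^sup>2 / t" using \<open>t > 0\<close> by simp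
    also have "\<dots> = (1 + t) * (a x)\<^sup>2 + (1 + 1/t) * (b x)\<^sup>2 - (a x - b x)\<^sup>2"
      using \<open>t > 0\<close> by (simp add: field_simps power2_eq_square)
    finally show ?thesis by simp
  qed
  then have "(\<integral>x. (a x - b x)\<^sup>2 \<partial>M) \<le> (\<integral>x. (1 + t) * (a x)\<^sup>2 + (1 + 1/t) * (b x)\<^sup>2 \<partial>M)"
    using a2 b2 by (intro integral_mono integrable_square_diff) auto
  also have "\<dots> = (1 + t) * (\<integral>x. (a x)\<^sup>2 \<partial>M) + (1 + 1/t) * (\<integral>x. (b x)\<^sup>2 \<partial>M)"
    using a2 b2 by simp
  finally show "(\<integral>x. (a x - b x)\<^sup>2 \<partial>M) \<le> \<dots>" .
qed auto

lemma (in finite_measure) integral_square_diff_mean_le: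
  fixes s :: "'a \<Rightarrow> real"
  assumes [measurable]: "s \<in> borel_measurable M" and s2: "integrable M (\<lambda>x. (s x)\<^sup>2)"
  shows "(\<integral>x. (s x - (\<integral>y. s y \<partial>M) / measure M (space M))\<^sup>2 \<partial>M) \<le> (\<integral>x. (s x - c)\<^sup>2 \<partial>M)"
proof -
  define I Q \<mu> where "I = (\<integral>y. s y \<partial>M)" and "Q = (\<integral>y. (s y)\<^sup>2 \<partial>M)" and "\<mu> = measure M (space M)"
  have "integrable M s" by (rule square_integrable_imp_integrable) (use s2 in simp_all)
  then have expand: "(\<integral>x. (s x - k)\<^sup>2 \<partial>M) = Q - 2 * k * I + k\<^sup>2 * \<mu>" for k
    using s2 by (simp add: power2_diff I_def Q_def \<mu>_def)
  show ?thesis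
  proof (cases "\<mu> = 0")
    case True
    then have "AE x in M. s x = 0"
      using finite_measure_mono[of "{x \<in> space M. s x \<noteq> 0}" "space M"]
      by (simp add: \<mu>_def AE_iff_measurable[OF _ refl] emeasure_eq_measure measure_le_0_iff)
    then have "I = 0" by (simp add: I_def integral_eq_zero_AE)
    then show ?thesis
      unfolding I_def[symmetric] \<mu>_def[symmetric] expand using True by simp
  next
    case False
    then have "\<mu> > 0" by (simp add: \<mu>_def zero_less_measure_iff measure_nonneg order_less_le)
    then have "Q - 2 * (I / \<mu>) * I + (I / \<mu>)\<^sup>2 * \<mu> + \<mu> * (c - I / \<mu>)\<^sup>2 = Q - 2 * c * I + c\<^sup>2 * \<mu>"
      by (simp add: field_simps power2_eq_square)
    moreover have "\<mu> * (c - I / \<mu>)\<^sup>2 \<ge> 0" using \<open>\<mu> > 0\<close> by simp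
    ultimately show ?thesis
      unfolding I_def[symmetric] \<mu>_def[symmetric] expand by simp
  qed
qed

lemma (in finite_measure) sqrt_integral_square_diff_mean_le:
  fixes s g r :: "'a \<Rightarrow> real"
  assumes [measurable]: "s \<in> borel_measurable M" "g \<in> borel_measurable M" "r \<in> borel_measurable M"
    and s2: "integrable M (\<lambda>x. (s x)\<^sup>2)" and g2: "integrable M (\<lambda>x. (g x)\<^sup>2)"
    and r_const: "AE x in M. r x = L"
  shows "sqrt (\<integral>x. (s x - (\<integral>y. s y \<partial>M) / measure M (space M))\<^sup>2 \<partial>M)
           \<le> sqrt (\<integral>x. (g x - c)\<^sup>2 \<partial>M) + sqrt (\<integral>x. (r x + g x - s x)\<^sup>2 \<partial>M)"
proof -
  have gc2: "integrable M (\<lambda>x. (g x - c)\<^sup>2)"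
    by (rule integrable_square_diff) (simp_all add: g2)
  have sL2: "integrable M (\<lambda>x. (s x - L)\<^sup>2)"
    by (rule integrable_square_diff) (simp_all add: s2)
  have gsL2: "integrable M (\<lambda>x. (g x - (s x - L))\<^sup>2)"
    by (rule integrable_square_diff) (simp_all add: g2 sL2)
  have "(\<integral>x. (s x - (\<integral>y. s y \<partial>M) / measure M (space M))\<^sup>2 \<partial>M) \<le> (\<integral>x. (s x - (c + L))\<^sup>2 \<partial>M)"
    by (rule integral_square_diff_mean_le) (simp_all add: s2)
  also have "\<dots> = (\<integral>x. ((g x - c) - (g x - (s x - L)))\<^sup>2 \<partial>M)"
    by (simp add: algebra_simps)
  finally have "sqrt (\<integral>x. (s x - (\<integral>y. s y \<partial>M) / measure M (space M))\<^sup>2 \<partial>M)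
      \<le> sqrt (\<integral>x. ((g x - c) - (g x - (s x - L)))\<^sup>2 \<partial>M)"
    by simp
  also have "\<dots> \<le> sqrt (\<integral>x. (g x - c)\<^sup>2 \<partial>M) + sqrt (\<integral>x. (g x - (s x - L))\<^sup>2 \<partial>M)"
    using gc2 gsL2 by (rule sqrt_integral_square_diff_le[rotated 2]) simp_all
  also have "(\<integral>x. (g x - (s x - L))\<^sup>2 \<partial>M) = (\<integral>x. (r x + g x - s x)\<^sup>2 \<partial>M)"
    using r_const by (intro integral_cong_AE) (auto simp: algebra_simps)
  finally show ?thesis .
qed

lemma pd_cong_open:
  assumes "open U" "x \<in> U" and eq: "\<And>y. y \<in> U \<Longrightarrow> h y = q y"
  shows "pd i h x = pd i q x"
proof -
  have "eventually (\<lambda>t. (t, snd x) \<in> U) (nhds (fst x))"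
    by (rule topological_tendstoD[OF tendsto_Pair[OF filterlim_ident tendsto_const]]) (use assms in simp_all)
  moreover have "eventually (\<lambda>t. (fst x, t) \<in> U) (nhds (snd x))"
    by (rule topological_tendstoD[OF tendsto_Pair[OF tendsto_const filterlim_ident]]) (use assms in simp_all)
  ultimately show ?thesis
    unfolding pd_def by (auto intro!: deriv_cong_ev elim!: eventually_mono simp: eq)
qed

lemma lap_cong_open:
  assumes "open U" "x \<in> U" and eq: "\<And>y. y \<in> U \<Longrightarrow> h y = q y"
  shows "lap h x = lap q x"
proof -
  have pd_eq: "pd i h y = pd i q y" if "y \<in> U" for i y
    using assms(1) that eq by (rule pd_cong_open)
  have "pd j (pd i h) x = pd j (pd i q) x" for i j
    by (rule pd_cong_open[OF assms(1,2)]) (rule pd_eq)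
  then show ?thesis by (simp add: lap_def)
qed

definition poly2 :: "real \<Rightarrow> real \<Rightarrow> real \<Rightarrow> real \<Rightarrow> real \<Rightarrow> real \<Rightarrow> pt \<Rightarrow> real" where
  "poly2 a b c d e g = (\<lambda>x. a + b * fst x + c * snd x + d * (fst x)\<^sup>2 + e * fst x * snd x + g * (snd x)\<^sup>2)"

lemma pd_fst_poly2: "pd True (poly2 a b c d e g) = poly2 b (2 * d) e 0 0 0"
proof
  fix x :: pt
  have "((\<lambda>t. a + b * t + c * snd x + d * t\<^sup>2 + e * t * snd x + g * (snd x)\<^sup>2) has_real_derivative
        b + 2 * d * fst x + e * snd x) (at (fst x))"
    by (auto intro!: derivative_eq_intros simp: power2_eq_square)
  then show "pd True (poly2 a b c d e g) x = poly2 b (2 * d) e 0 0 0 x"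
    by (simp add: pd_def poly2_def DERIV_imp_deriv)
qed

lemma pd_snd_poly2: "pd False (poly2 a b c d e g) = poly2 c e (2 * g) 0 0 0"
proof
  fix x :: pt
  have "((\<lambda>t. a + b * fst x + c * t + d * (fst x)\<^sup>2 + e * fst x * t + g * t\<^sup>2) has_real_derivative
        c + e * fst x + 2 * g * snd x) (at (snd x))"
    by (auto intro!: derivative_eq_intros simp: power2_eq_square)
  then show "pd False (poly2 a b c d e g) x = poly2 c e (2 * g) 0 0 0 x"
    by (simp add: pd_def poly2_def DERIV_imp_deriv)
qed

lemma lap_poly2: "lap (poly2 a b c d e g) x = 2 * d + 2 * g"
  by (simp add: lap_def pd_fst_poly2 pd_snd_poly2) (simp add: poly2_def)

lemma P2_on_lap_constant_on_interior:
  assumes "P2_on T u"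
  obtains L where "\<And>x. x \<in> interior T \<Longrightarrow> lap u x = L"
proof -
  obtain a b c d e g where "\<And>x. x \<in> T \<Longrightarrow> u x = poly2 a b c d e g x"
    using assms unfolding P2_on_def poly2_def by blast
  then have "lap u x = 2 * d + 2 * g" if "x \<in> interior T" for x
    using lap_cong_open[OF open_interior that, of u "poly2 a b c d e g"] interior_subset
    by (auto simp: lap_poly2)
  then show ?thesis by (rule that)
qed

lemma borel_measurable_lebesgue_on_negligible_diff:
  fixes h g :: "'a::euclidean_space \<Rightarrow> real"
  assumes S: "S \<in> sets lebesgue" and S': "S' \<in> sets lebesgue"
    and g: "g \<in> borel_measurable (lebesgue_on S')"
    and eq: "\<And>x. x \<in> S \<Longrightarrow> x \<in> S' \<Longrightarrow> h x = g x" and N: "negligible (S - S')"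
  shows "h \<in> borel_measurable (lebesgue_on S)"
  unfolding borel_measurable_lebesgue_on_preimage_borel[OF S]
proof (intro allI impI)
  fix B :: "real set" assume "B \<in> sets borel"
  then have "{x \<in> S'. g x \<in> B} \<in> sets lebesgue"
    using g borel_measurable_lebesgue_on_preimage_borel[OF S'] by blast
  moreover have "{x \<in> S - S'. h x \<in> B} \<in> sets lebesgue"
    by (rule negligible_imp_sets, rule negligible_subset[OF N]) auto
  moreover have "{x \<in> S. h x \<in> B} = ({x \<in> S'. g x \<in> B} \<inter> S) \<union> {x \<in> S - S'. h x \<in> B}"
    using eq by auto
  ultimately show "{x \<in> S. h x \<in> B} \<in> sets lebesgue" using S by auto
qed

lemma integrable_lebesgue_on_negligible_diff:
  fixes F :: "'a::euclidean_space \<Rightarrow> real"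
  assumes S: "S \<in> sets lebesgue" and S': "S' \<in> sets lebesgue"
    and "F \<in> borel_measurable (lebesgue_on S)"
    and "integrable (lebesgue_on S') F" and N: "negligible (S - S')"
  shows "integrable (lebesgue_on S) F"
proof -
  have "integrable lebesgue (\<lambda>x. indicator S x *\<^sub>R F x)"
  proof (rule Bochner_Integration.integrable_bound)
    show "integrable lebesgue (\<lambda>x. indicator S' x *\<^sub>R F x)"
      using assms(4) S' by (simp add: integrable_restrict_space)
    show "(\<lambda>x. indicator S x *\<^sub>R F x) \<in> borel_measurable lebesgue"
      using assms(3) S by (simp add: borel_measurable_restrict_space_iff)
    show "AE x in lebesgue. norm (indicator S x *\<^sub>R F x) \<le> norm (indicator S' x *\<^sub>R F x)"
      by (rule AE_I'[where N="S - S'"]) (auto simp: indicator_def N negligible_iff_null_sets[symmetric])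
  qed
  then show ?thesis using S by (simp add: integrable_restrict_space)
qed

lemma L2_on_negligible_diff:
  assumes "L2_on \<Omega> f" "S \<in> sets lebesgue" "\<Omega> \<in> sets lebesgue" "negligible (S - \<Omega>)"
  shows "L2_on S f"
  using assms unfolding L2_on_def
  by (auto intro: borel_measurable_lebesgue_on_negligible_diff integrable_lebesgue_on_negligible_diff)

lemma L2_on_compact_affine_fun:
  assumes "compact T" "affine_fun s"
  shows "L2_on T s"
proof -
  obtain a b c where "s = (\<lambda>x. a + b * fst x + c * snd x)"
    using \<open>affine_fun s\<close> unfolding affine_fun_def by blast
  then have s_cont: "continuous_on T s" by (simp add: continuous_intros)
  have T: "T \<in> sets lebesgue" using lmeasurable_compact[OF \<open>compact T\<close>] by (rule fmeasurableD)
  have "continuous_on T (\<lambda>x. (s x)\<^sup>2)" using s_cont by (intro continuous_intros)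
  then have s2_lborel: "integrable lborel (\<lambda>x. indicator T x *\<^sub>R (s x)\<^sup>2)"
    by (rule borel_integrable_compact[OF \<open>compact T\<close>])
  then have "integrable lebesgue (\<lambda>x. indicator T x *\<^sub>R (s x)\<^sup>2)"
    by (simp only: integrable_completion[OF borel_measurable_integrable[OF s2_lborel]])
  then show ?thesis
    using s_cont T by (simp add: L2_on_def integrable_restrict_space continuous_imp_measurable_on_sets_lebesgue)
qed

lemma L2norm_diff_elem_mean_le:
  fixes T \<Omega> :: "pt set" and f u s :: "pt \<Rightarrow> real"
  assumes "compact T" "convex T" "\<Omega> \<in> sets lebesgue" "interior T \<subseteq> \<Omega>"
    and "L2_on \<Omega> f" "affine_fun s" "P2_on T u"
  shows "L2norm T (\<lambda>x. s x - elem_mean T s)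
           \<le> (INF c::real. L2norm T (\<lambda>x. f x - c)) + L2norm T (\<lambda>x. lap u x + f x - s x)"
proof -
  have T: "T \<in> lmeasurable" using \<open>compact T\<close> by (rule lmeasurable_compact)
  then have T_sets: "T \<in> sets lebesgue" by (rule fmeasurableD)
  interpret finite_measure "lebesgue_on T" using T by (rule finite_measure_lebesgue_on)
  have null_frontier: "negligible (T - interior T)"
    using negligible_convex_frontier[OF \<open>convex T\<close>] \<open>compact T\<close>
    by (simp add: frontier_def compact_imp_closed)
  have null_outside: "negligible (T - \<Omega>)"
    using \<open>interior T \<subseteq> \<Omega>\<close> by (intro negligible_subset[OF null_frontier]) blast
  obtain L where lapL: "\<And>x. x \<in> interior T \<Longrightarrow> lap u x = L"
    using P2_on_lap_constant_on_interior[OF \<open>P2_on T u\<close>] by blast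
  have s_meas [measurable]: "s \<in> borel_measurable (lebesgue_on T)"
    and s2: "integrable (lebesgue_on T) (\<lambda>x. (s x)\<^sup>2)"
    using L2_on_compact_affine_fun[OF \<open>compact T\<close> \<open>affine_fun s\<close>] by (simp_all add: L2_on_def)
  have f_meas [measurable]: "f \<in> borel_measurable (lebesgue_on T)"
    and f2: "integrable (lebesgue_on T) (\<lambda>x. (f x)\<^sup>2)"
    using L2_on_negligible_diff[OF \<open>L2_on \<Omega> f\<close> T_sets \<open>\<Omega> \<in> sets lebesgue\<close> null_outside]
    by (simp_all add: L2_on_def)
  have lap_meas [measurable]: "lap u \<in> borel_measurable (lebesgue_on T)"
    using lapL
    by (intro borel_measurable_lebesgue_on_negligible_diff[OF T_sets _ _ _ null_frontier, where g="\<lambda>_. L"]) auto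
  have lap_ae: "AE x in lebesgue_on T. lap u x = L"
  proof (subst AE_restrict_space_iff)
    show "T \<inter> space lebesgue \<in> sets lebesgue" using T_sets by simp
    show "AE x in lebesgue. x \<in> T \<longrightarrow> lap u x = L"
      using lapL null_frontier
      by (intro AE_I'[where N="T - interior T"]) (auto simp: negligible_iff_null_sets)
  qed
  have measure_T: "measure (lebesgue_on T) (space (lebesgue_on T)) = measure lebesgue T"
    using T_sets by (simp add: measure_restrict_space)
  have "L2norm T (\<lambda>x. s x - elem_mean T s) - L2norm T (\<lambda>x. lap u x + f x - s x)
      \<le> L2norm T (\<lambda>x. f x - c)" for c
    using sqrt_integral_square_diff_mean_le[OF s_meas f_meas lap_meas s2 f2 lap_ae, of c]
    unfolding L2norm_def elem_mean_def measure_T by linarith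
  then have "L2norm T (\<lambda>x. s x - elem_mean T s) - L2norm T (\<lambda>x. lap u x + f x - s x)
      \<le> (INF c::real. L2norm T (\<lambda>x. f x - c))"
    by (intro cINF_greatest) auto
  then show ?thesis by linarith
qed

lemma triangulation_elementD:
  assumes "domain \<Omega>" "triangulation \<Omega> \<T>" "T \<in> \<T>"
  shows "compact T" "convex T" "interior T \<subseteq> \<Omega>"
proof -
  have "is_triangle T" using assms(2,3) by (simp add: triangulation_def)
  then obtain p q r where "T = convex hull {p, q, r}" by (auto simp: is_triangle_def)
  then show "compact T" "convex T"
    by (simp_all add: finite_imp_compact_convex_hull)
  have "interior T \<subseteq> interior (closure \<Omega>)"
    using assms(2,3) by (intro interior_mono) (auto simp: triangulation_def)
  then show "interior T \<subseteq> \<Omega>"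
    using assms(1) by (simp add: domain_def)
qed

lemma L2_set_weighted_le_add:
  assumes "\<And>i. i \<in> A \<Longrightarrow> 0 \<le> a i" "\<And>i. i \<in> A \<Longrightarrow> a i \<le> b i + e i" "\<And>i. i \<in> A \<Longrightarrow> 0 \<le> w i"
  shows "L2_set (\<lambda>i. w i * a i) A \<le> L2_set (\<lambda>i. w i * b i) A + L2_set (\<lambda>i. w i * e i) A"
proof -
  have "L2_set (\<lambda>i. w i * a i) A \<le> L2_set (\<lambda>i. w i * b i + w i * e i) A"
    using assms by (intro L2_set_mono) (auto simp flip: distrib_left intro: mult_left_mono)
  also have "\<dots> \<le> L2_set (\<lambda>i. w i * b i) A + L2_set (\<lambda>i. w i * e i) A"
    by (rule L2_set_triangle_ineq)
  finally show ?thesis .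
qed

theorem lemma3p4:
  fixes \<Omega> :: "pt set" and \<kappa> :: real
  assumes "domain \<Omega>"
  shows "\<exists>C>0. \<forall>\<T> f chi u \<sigma>.
     triangulation \<Omega> \<T> \<and> shape_regular \<kappa> \<T> \<and>
     L2_on \<Omega> f \<and>
     continuous_on (closure \<Omega>) chi \<and> H1_on \<Omega> chi \<and> (\<forall>x\<in>frontier \<Omega>. chi x \<le> 0) \<and>
     u \<in> Kh \<Omega> \<T> chi \<and>
     (\<forall>v \<in> Kh \<Omega> \<T> chi. a_form \<Omega> u (\<lambda>x. v x - u x) \<ge> L2ip \<Omega> f (\<lambda>x. v x - u x)) \<and>
     \<sigma> \<in> Vnc \<Omega> \<T> \<and>
     (\<forall>v \<in> Vnc \<Omega> \<T>. disc_ip \<T> \<sigma> v =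
         L2ip \<Omega> f (Pih \<Omega> \<T> v) - a_form \<Omega> u (Pih \<Omega> \<T> v))
     \<longrightarrow> eta3 \<T> \<sigma> \<le> C * (eta1 \<T> f u \<sigma> + eta4 \<T> f)"
proof (intro exI[of _ 1] conjI allI impI; (elim conjE)?)
  fix \<T> f chi u \<sigma>
  assume tri: "triangulation \<Omega> \<T>" and "L2_on \<Omega> f" and "u \<in> Kh \<Omega> \<T> chi" and "\<sigma> \<in> Vnc \<Omega> \<T>"
  have "open \<Omega>" using assms by (simp add: domain_def)
  define dev resid osc where
    "dev T = L2norm T (\<lambda>x. \<sigma> T x - elem_mean T (\<sigma> T))" and
    "resid T = L2norm T (\<lambda>x. lap u x + f x - \<sigma> T x)" and
    "osc T = (INF c::real. L2norm T (\<lambda>x. f x - c))" for T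
  have "dev T \<le> osc T + resid T" if "T \<in> \<T>" for T
    unfolding dev_def osc_def resid_def
    using triangulation_elementD[OF assms tri that] \<open>open \<Omega>\<close> \<open>L2_on \<Omega> f\<close>
      \<open>\<sigma> \<in> Vnc \<Omega> \<T>\<close> \<open>u \<in> Kh \<Omega> \<T> chi\<close> that
    by (intro L2norm_diff_elem_mean_le) (auto simp: Vnc_def Kh_def Vh_def)
  moreover have "0 \<le> diameter T" if "T \<in> \<T>" for T
    using triangulation_elementD(1)[OF assms tri that] by (simp add: diameter_ge_0 compact_imp_bounded)
  moreover have "0 \<le> dev T" for T by (simp add: dev_def L2norm_def)
  ultimately have "L2_set (\<lambda>T. diameter T * dev T) \<T>
      \<le> L2_set (\<lambda>T. diameter T * osc T) \<T> + L2_set (\<lambda>T. diameter T * resid T) \<T>"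
    by (intro L2_set_weighted_le_add)
  then show "eta3 \<T> \<sigma> \<le> 1 * (eta1 \<T> f u \<sigma> + eta4 \<T> f)"
    by (simp add: eta1_def eta3_def eta4_def L2_set_def power_mult_distrib dev_def osc_def resid_def)
qed simp

end
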